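(* Let $a,b$ be positive integers (neither assumed prime or square-free). Let $f$ be a reduced form of discriminant $-4a^2b$ whose class in $C(-4a^2b)$ is derived from the class of $e_{-4b}=(1,0,b)$ in $C(-4b)$, and suppose $f$ is not equivalent to $(1,0,a^2b)$. Among the positive divisors $a_2$ of $a$ such that the class of $f$ is derived from the class of $(1,0,(a/a_2)^2b)$ in $C(-4(a/a_2)^2b)$, choose one for which $b_2=(a/a_2)^2b$ is maximal. If $b_2>a_2^2$, then \[ f=(a_2^2,\;2a_2k,\;k^2+b_2) \] for some integer $k$ with $-a_2/2\le k\le a_2/2$.
   Context: A binary quadratic form $(a,b,c)$ means $ax^2+bxy+cy^2$ with integer coefficients and discriminant $b^2-4ac$; primitive means $\gcd(a,b,c)=1$. Two forms are equivalent if one is obtained from the other by an integer substitution of determinant $1$. A form $(a,b,c)$ of negative discriminant is reduced if $|b|\le a\le c$, and $b\ge0$ whenever $|b|=a$ or $a=c$; every positive definite form is equivalent to a unique reduced form. For $\Delta<0$, $C(\Delta)$ is the class group of equivalence classes of primitive positive definite forms of discriminant $\Delta$ under composition. For a positive integer $s$, a class $f\in C(\Delta s^2)$ is derived from a class $g\in C(\Delta)$ if there exist a representative $g_0$ of $g$ and an integer matrix $\begin{pmatrix}\alpha&\beta\\ \gamma&\delta\end{pmatrix}$ of determinant $s$ such that the form $g_0(\alpha x+\beta y,\gamma x+\delta y)$ lies in the class $f$. *)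

theory Defs
  imports Main
begin

text \<open>A binary quadratic form (a,b,c) stands for a x^2 + b x y + c y^2.\<close>
type_synonym bqf = "int \<times> int \<times> int"

definition disc :: "bqf \<Rightarrow> int" where
  "disc f = (case f of (a, b, c) \<Rightarrow> b^2 - 4*a*c)"

definition primitive :: "bqf \<Rightarrow> bool" where
  "primitive f = (case f of (a, b, c) \<Rightarrow> gcd a (gcd b c) = 1)"

definition pos_def :: "bqf \<Rightarrow> bool" where
  "pos_def f = (case f of (a, b, c) \<Rightarrow> a > 0 \<and> b^2 - 4*a*c < 0)"

text \<open>The form g(\<alpha> x + \<beta> y, \<gamma> x + \<delta> y).\<close>
definition subst :: "bqf \<Rightarrow> int \<Rightarrow> int \<Rightarrow> int \<Rightarrow> int \<Rightarrow> bqf" where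
  "subst f \<alpha> \<beta> \<gamma> \<delta> = (case f of (a, b, c) \<Rightarrow>
     (a*\<alpha>^2 + b*\<alpha>*\<gamma> + c*\<gamma>^2,
      2*a*\<alpha>*\<beta> + b*(\<alpha>*\<delta> + \<beta>*\<gamma>) + 2*c*\<gamma>*\<delta>,
      a*\<beta>^2 + b*\<beta>*\<delta> + c*\<delta>^2))"

definition equiv_bqf :: "bqf \<Rightarrow> bqf \<Rightarrow> bool" where
  "equiv_bqf f g = (\<exists>\<alpha> \<beta> \<gamma> \<delta>. \<alpha>*\<delta> - \<beta>*\<gamma> = 1 \<and> subst f \<alpha> \<beta> \<gamma> \<delta> = g)"

definition reduced :: "bqf \<Rightarrow> bool" where
  "reduced f = (case f of (a, b, c) \<Rightarrow>
     \<bar>b\<bar> \<le> a \<and> a \<le> c \<and> ((\<bar>b\<bar> = a \<or> a = c) \<longrightarrow> b \<ge> 0))"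

text \<open>The class of f (in C(\<Delta> s^2)) is derived from the class of g (in C(\<Delta>)):
  some representative g0 of the class of g, transformed by an integer matrix of
  determinant s, lies in the class of f.\<close>
definition derived_from :: "bqf \<Rightarrow> bqf \<Rightarrow> int \<Rightarrow> bool" where
  "derived_from f g s = (\<exists>g0. equiv_bqf g g0 \<and>
     (\<exists>\<alpha> \<beta> \<gamma> \<delta>. \<alpha>*\<delta> - \<beta>*\<gamma> = s \<and> equiv_bqf (subst g0 \<alpha> \<beta> \<gamma> \<delta>) f))"

end

theory Submission
  imports Defs
begin

(* By the derivation hypothesis, f is equivalent to the form (1,0,B), B = (a/a2)^2 b, transformed
   by an integer matrix of determinant a2. Unimodular column operations make this matrix upper
   triangular, [[p,q],[0,r]] with p r = a2 and r > 0. As (1,0,B) transformed by it is (1,0,r^2 B)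
   transformed by [[p,q],[0,1]], f is also derived from (1,0,(a/p)^2 b) with divisor p, and
   maximality of B forces r = 1. So f is equivalent to (a2^2, 2 a2 q, q^2 + B); the substitution
   x -> x + t y moves q into the centred range of residues modulo a2, and B > a2^2 makes the
   resulting form reduced, hence equal to f by uniqueness of reduced forms. *)

lemma subst_subst:
  "subst (subst f a1 b1 c1 d1) a2 b2 c2 d2 =
   subst f (a1*a2 + b1*c2) (a1*b2 + b1*d2) (c1*a2 + d1*c2) (c1*b2 + d1*d2)"
  by (cases f) (simp add: subst_def power2_eq_square algebra_simps)

lemma subst_1_0_0_1 [simp]: "subst f 1 0 0 1 = f"
  by (cases f) (simp add: subst_def)

lemma disc_subst: "disc (subst f \<alpha> \<beta> \<gamma> \<delta>) = (\<alpha>*\<delta> - \<beta>*\<gamma>)^2 * disc f"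
  by (cases f) (simp add: subst_def disc_def power2_eq_square algebra_simps)

lemma det_mult:
  fixes a1 b1 c1 d1 a2 b2 c2 d2 :: int
  shows "(a1*a2 + b1*c2)*(c1*b2 + d1*d2) - (a1*b2 + b1*d2)*(c1*a2 + d1*c2)
         = (a1*d1 - b1*c1)*(a2*d2 - b2*c2)"
  by (simp add: algebra_simps)

lemma equiv_bqf_subst: "\<alpha>*\<delta> - \<beta>*\<gamma> = 1 \<Longrightarrow> equiv_bqf f (subst f \<alpha> \<beta> \<gamma> \<delta>)"
  unfolding equiv_bqf_def by blast

lemma equiv_bqf_refl: "equiv_bqf f f"
  using equiv_bqf_subst[of 1 1 0 0 f] by simp

lemma equiv_bqf_trans: "equiv_bqf f g \<Longrightarrow> equiv_bqf g h \<Longrightarrow> equiv_bqf f h"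
  unfolding equiv_bqf_def by (metis subst_subst det_mult mult_1)

lemma subst_inverse:
  "\<alpha>*\<delta> - \<beta>*\<gamma> = 1 \<Longrightarrow> subst (subst f \<alpha> \<beta> \<gamma> \<delta>) \<delta> (-\<beta>) (-\<gamma>) \<alpha> = f"
  unfolding subst_subst by (simp add: algebra_simps)

lemma equiv_bqf_sym: "equiv_bqf f g \<Longrightarrow> equiv_bqf g f"
  unfolding equiv_bqf_def by (metis subst_inverse mult.commute minus_mult_minus)

lemma disc_equiv: "equiv_bqf f g \<Longrightarrow> disc g = disc f"
  unfolding equiv_bqf_def by (auto simp: disc_subst)

lemma derived_from_iff:
  "derived_from f g s \<longleftrightarrow>
     (\<exists>\<alpha> \<beta> \<gamma> \<delta>. \<alpha>*\<delta> - \<beta>*\<gamma> = s \<and> equiv_bqf (subst g \<alpha> \<beta> \<gamma> \<delta>) f)"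
proof
  assume "derived_from f g s"
  then obtain u1 u2 u3 u4 \<alpha> \<beta> \<gamma> \<delta> where "u1*u4 - u2*u3 = 1"
    and "\<alpha>*\<delta> - \<beta>*\<gamma> = s" and "equiv_bqf (subst (subst g u1 u2 u3 u4) \<alpha> \<beta> \<gamma> \<delta>) f"
    unfolding derived_from_def equiv_bqf_def by blast
  then show "\<exists>\<alpha> \<beta> \<gamma> \<delta>. \<alpha>*\<delta> - \<beta>*\<gamma> = s \<and> equiv_bqf (subst g \<alpha> \<beta> \<gamma> \<delta>) f"
    unfolding subst_subst by (metis det_mult mult_1)
next
  assume "\<exists>\<alpha> \<beta> \<gamma> \<delta>. \<alpha>*\<delta> - \<beta>*\<gamma> = s \<and> equiv_bqf (subst g \<alpha> \<beta> \<gamma> \<delta>) f"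
  then show "derived_from f g s"
    unfolding derived_from_def using equiv_bqf_refl by blast
qed

lemma unimodular_triangularization:
  fixes \<alpha> \<beta> \<gamma> \<delta> :: int
  assumes "\<alpha>*\<delta> - \<beta>*\<gamma> \<noteq> 0"
  obtains v1 v2 v3 v4 p q r where "v1*v4 - v2*v3 = 1" "r > 0"
    "\<alpha>*v1 + \<beta>*v3 = p" "\<alpha>*v2 + \<beta>*v4 = q" "\<gamma>*v1 + \<delta>*v3 = 0" "\<gamma>*v2 + \<delta>*v4 = r"
proof -
  define r where "r = gcd \<gamma> \<delta>"
  have "r \<noteq> 0" using assms unfolding r_def by auto
  then have r: "r > 0" unfolding r_def by (simp add: order_le_neq_trans)
  obtain u v where uv: "\<gamma>*u + \<delta>*v = r" using bezout_int[of \<gamma> \<delta>] unfolding r_def by (auto simp: mult.commute)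
  obtain \<gamma>' \<delta>' where \<gamma>': "\<gamma> = r*\<gamma>'" and \<delta>': "\<delta> = r*\<delta>'" unfolding r_def by (meson gcd_dvd1 gcd_dvd2 dvdE)
  have "r*(\<delta>'*v + \<gamma>'*u) = r*1" using uv \<gamma>' \<delta>' by (simp add: algebra_simps)
  then have "\<delta>'*v - u*(-\<gamma>') = 1" using \<open>r \<noteq> 0\<close> mult_cancel_left[of r] by (simp add: mult.commute)
  moreover have "\<gamma>*\<delta>' + \<delta>*(-\<gamma>') = 0" using \<gamma>' \<delta>' by simp
  ultimately show thesis using that uv r by blast
qed

lemma derived_from_triangular:
  assumes "derived_from f g s" "s \<noteq> 0"
  obtains p q r where "r > 0" "p*r = s" "equiv_bqf (subst g p q 0 r) f"
proof -
  obtain \<alpha> \<beta> \<gamma> \<delta> where M: "\<alpha>*\<delta> - \<beta>*\<gamma> = s" and f: "equiv_bqf (subst g \<alpha> \<beta> \<gamma> \<delta>) f"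
    using assms(1) unfolding derived_from_iff by blast
  obtain v1 v2 v3 v4 p q r where V: "v1*v4 - v2*v3 = 1" "r > 0"
    and T: "\<alpha>*v1 + \<beta>*v3 = p" "\<alpha>*v2 + \<beta>*v4 = q" "\<gamma>*v1 + \<delta>*v3 = 0" "\<gamma>*v2 + \<delta>*v4 = r"
    using unimodular_triangularization M assms(2) by metis
  have "p*r - q*0 = s*1"
    using det_mult[of \<alpha> v1 \<beta> v3 \<gamma> v2 \<delta> v4] M V(1) T by simp
  moreover have "subst (subst g \<alpha> \<beta> \<gamma> \<delta>) v1 v2 v3 v4 = subst g p q 0 r"
    unfolding subst_subst T ..
  then have "equiv_bqf (subst g p q 0 r) f"
    using equiv_bqf_trans[OF equiv_bqf_sym[OF equiv_bqf_subst[OF V(1)]] f] by simp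
  ultimately show thesis using that V(2) by simp
qed

lemma le_mult_power2: "(x::int) \<noteq> 0 \<Longrightarrow> 0 \<le> c \<Longrightarrow> c \<le> c * x^2"
  using mult_left_mono[of 1 "x^2" c] by (simp add: int_one_le_iff_zero_less)

lemma value_ge_both_nonzero:
  fixes a b c x y :: int
  assumes "\<bar>b\<bar> \<le> a" "\<bar>b\<bar> \<le> c" "x \<noteq> 0" "y \<noteq> 0"
  shows "a - \<bar>b\<bar> + c \<le> a*x^2 + b*x*y + c*y^2"
proof -
  have "(\<bar>x\<bar> - \<bar>y\<bar>)^2 + \<bar>x\<bar>*\<bar>y\<bar> = x^2 + y^2 - \<bar>x*y\<bar>"
    by (simp add: power2_eq_square abs_mult algebra_simps)
  moreover have "1 \<le> (\<bar>x\<bar> - \<bar>y\<bar>)^2 + \<bar>x\<bar>*\<bar>y\<bar>"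
    using assms(3,4) by (smt (verit) mult_pos_pos zero_le_power2)
  ultimately have "\<bar>b\<bar> * 1 \<le> \<bar>b\<bar> * (x^2 + y^2 - \<bar>x*y\<bar>)"
    by (intro mult_left_mono) simp_all
  moreover have "- (\<bar>b\<bar> * \<bar>x*y\<bar>) \<le> b*x*y"
    by (metis abs_ge_minus_self abs_mult minus_le_iff mult.assoc)
  moreover have "a - \<bar>b\<bar> \<le> (a - \<bar>b\<bar>)*x^2" "c - \<bar>b\<bar> \<le> (c - \<bar>b\<bar>)*y^2"
    using assms by (simp_all add: le_mult_power2)
  ultimately show ?thesis by (simp add: algebra_simps)
qed

lemma reduced_value_ge:
  fixes a b c x y :: int
  assumes "reduced (a, b, c)" "(x, y) \<noteq> (0, 0)"
  shows "a \<le> a*x^2 + b*x*y + c*y^2"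
proof -
  have abc: "\<bar>b\<bar> \<le> a" "a \<le> c" using assms(1) by (simp_all add: reduced_def)
  then have "0 \<le> c" by linarith
  consider "x = 0" "y \<noteq> 0" | "x \<noteq> 0" "y = 0" | "x \<noteq> 0" "y \<noteq> 0" using assms(2) by auto
  then show ?thesis
  proof cases
    case 1 then show ?thesis using abc le_mult_power2[of y c] \<open>0 \<le> c\<close> by simp
  next
    case 2 then show ?thesis using abc le_mult_power2[of x a] by simp
  next
    case 3 then show ?thesis using abc value_ge_both_nonzero[of b a c x y] by simp
  qed
qed

lemma reduced_equiv_first_le:
  assumes "reduced (a, b, c)" "equiv_bqf (a, b, c) (a', b', c')"
  shows "a \<le> a'"
proof -
  obtain \<alpha> \<beta> \<gamma> \<delta> where "\<alpha>*\<delta> - \<beta>*\<gamma> = 1" "subst (a, b, c) \<alpha> \<beta> \<gamma> \<delta> = (a', b', c')"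
    using assms(2) unfolding equiv_bqf_def by blast
  then have "a' = a*\<alpha>^2 + b*\<alpha>*\<gamma> + c*\<gamma>^2" "(\<alpha>, \<gamma>) \<noteq> (0, 0)"
    by (auto simp: subst_def)
  then show ?thesis using reduced_value_ge[OF assms(1)] by simp
qed

lemma reduced_last_eq_first:
  fixes a b c \<alpha> \<gamma> :: int
  assumes "reduced (a, b, c)" "\<gamma> \<noteq> 0" "a*\<alpha>^2 + b*\<alpha>*\<gamma> + c*\<gamma>^2 = a"
  shows "c = a"
proof -
  have abc: "\<bar>b\<bar> \<le> a" "a \<le> c" using assms(1) by (simp_all add: reduced_def)
  show ?thesis
  proof (cases "\<alpha> = 0")
    case True
    then show ?thesis using assms(2,3) abc le_mult_power2[of \<gamma> c] by simp
  next
    case False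
    then show ?thesis using assms(2,3) abc value_ge_both_nonzero[of b a c \<alpha> \<gamma>] by simp
  qed
qed

lemma reduced_middle_bounds: "reduced (a, b, c) \<Longrightarrow> 0 < a \<Longrightarrow> -a < b \<and> b \<le> a"
  by (auto simp: reduced_def)

lemma eq_if_dvd_diff_less:
  fixes x y d :: int
  assumes "d dvd x - y" "\<bar>x - y\<bar> < d"
  shows "x = y"
  using dvd_imp_le_int[of "x - y" d] assms by (cases "x = y") auto

lemma reduced_equiv_eq:
  assumes f: "reduced (a, b, c)" and g: "reduced (a', b', c')" and a: "0 < a"
    and equiv: "equiv_bqf (a, b, c) (a', b', c')"
  shows "(a', b', c') = (a, b, c)"
proof -
  have aa: "a' = a"
    using reduced_equiv_first_le[OF f equiv] reduced_equiv_first_le[OF g equiv_bqf_sym[OF equiv]]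
    by simp
  obtain \<alpha> \<beta> \<gamma> \<delta> where det: "\<alpha>*\<delta> - \<beta>*\<gamma> = 1" and hs: "subst (a, b, c) \<alpha> \<beta> \<gamma> \<delta> = (a', b', c')"
    using equiv unfolding equiv_bqf_def by blast
  have ea: "a*\<alpha>^2 + b*\<alpha>*\<gamma> + c*\<gamma>^2 = a"
    and eb: "b' = 2*a*\<alpha>*\<beta> + b*(\<alpha>*\<delta> + \<beta>*\<gamma>) + 2*c*\<gamma>*\<delta>"
    using hs aa by (auto simp: subst_def)
  have "subst (a', b', c') \<delta> (-\<beta>) (-\<gamma>) \<alpha> = (a, b, c)"
    using subst_inverse[OF det, of "(a, b, c)"] unfolding hs .
  then have ea': "a*\<delta>^2 + b'*\<delta>*(-\<gamma>) + c'*(-\<gamma>)^2 = a"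
    using aa by (simp add: subst_def)
  have dd: "b'^2 - 4*a*c' = b^2 - 4*a*c"
    using disc_equiv[OF equiv] aa by (simp add: disc_def)
  have bb: "b' = b"
  proof (cases "\<gamma> = 0")
    case True
    then have "b' - b = 2*a*(\<alpha>*\<beta>)" using eb det by (simp add: algebra_simps)
    then have "2*a dvd b' - b" by simp
    moreover have "\<bar>b' - b\<bar> < 2*a"
      using reduced_middle_bounds[OF f a] reduced_middle_bounds[OF g] a aa by auto
    ultimately show ?thesis by (rule eq_if_dvd_diff_less)
  next
    case False
    then have "c = a" "c' = a"
      using reduced_last_eq_first[OF f False ea] reduced_last_eq_first[OF g _ ea'[folded aa]] aa
      by simp_all
    then have "0 \<le> b" "0 \<le> b'" "b'^2 = b^2" using f g aa dd by (auto simp: reduced_def)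
    then show ?thesis by simp
  qed
  have "c' = c" using dd a unfolding bb by simp
  then show ?thesis using aa bb by simp
qed

lemma subst_principal_upper:
  "subst (1, 0, B) p q 0 r = (p^2, 2*p*q, q^2 + r^2*B)"
  by (simp add: subst_def power2_eq_square)

lemma equiv_principal_upper_shift:
  "equiv_bqf (subst (1, 0, B) n q 0 1) (subst (1, 0, B) n (q + n*t) 0 1)"
  using equiv_bqf_subst[of 1 1 t 0 "subst (1, 0, B) n q 0 1"] by (simp add: subst_subst add.commute)

lemma derived_from_principal_upper:
  assumes "equiv_bqf (subst (1, 0, B) p q 0 r) f"
  shows "derived_from f (1, 0, r^2*B) p"
proof -
  have "subst (1, 0, r^2*B) p q 0 1 = subst (1, 0, B) p q 0 r"
    by (simp add: subst_principal_upper)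
  then show ?thesis
    unfolding derived_from_iff using assms
    by (intro exI[of _ p] exI[of _ q] exI[of _ 0] exI[of _ 1]) simp
qed

lemma centered_residue:
  fixes n q :: int
  assumes "0 < n"
  obtains k t where "q = k + n*t" "-n < 2*k" "2*k \<le> n"
proof -
  define r where "r = q mod n"
  have r: "0 \<le> r" "r < n" "q = r + n*(q div n)" using assms unfolding r_def by simp_all
  show thesis
  proof (cases "2*r \<le> n")
    case True
    then show thesis using r that[of r "q div n"] by linarith
  next
    case False
    then show thesis using r that[of "r - n" "q div n + 1"] by (simp add: algebra_simps)
  qed
qed

lemma reduced_principal_upper:
  fixes n k B :: int
  assumes "0 < n" "n^2 < B" "-n < 2*k" "2*k \<le> n"
  shows "reduced (subst (1, 0, B) n k 0 1)"
proof -
  have abs: "\<bar>2*n*k\<bar> = n*\<bar>2*k\<bar>" using assms(1) by (simp add: abs_mult)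
  have "n*\<bar>2*k\<bar> \<le> n*n" using assms by (intro mult_left_mono) auto
  then have "\<bar>2*n*k\<bar> \<le> n^2" using abs by (simp add: power2_eq_square)
  moreover have "\<bar>2*n*k\<bar> = n^2 \<Longrightarrow> 0 \<le> 2*n*k"
    using abs assms by (auto simp: power2_eq_square)
  moreover have "n^2 < k^2 + B" using assms(2) zero_le_power2[of k] by linarith
  ultimately show ?thesis by (auto simp: reduced_def subst_principal_upper)
qed

lemma eq_1_if_square_mult_le:
  fixes r x :: int
  assumes "0 < r" "0 < x" "r^2 * x \<le> x"
  shows "r = 1"
proof -
  have "r^2 \<le> 1" using assms(2,3) mult_le_cancel_right_pos[of x "r^2" 1] by simp
  then have "\<bar>r\<bar> \<le> 1" using abs_le_square_iff[of r 1] by simp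
  then show ?thesis using assms(1) by simp
qed

theorem propositionA2:
  fixes a b a2 :: int and f :: bqf
  assumes "a > 0" and "b > 0"
    and "reduced f" and "primitive f" and "pos_def f"
    and "disc f = -4*a^2*b"
    and "derived_from f (1, 0, b) a"
    and "\<not> equiv_bqf f (1, 0, a^2*b)"
    and "a2 > 0" and "a2 dvd a"
    and "derived_from f (1, 0, (a div a2)^2*b) a2"
    and "\<forall>a2'. a2' > 0 \<and> a2' dvd a \<and> derived_from f (1, 0, (a div a2')^2*b) a2'
            \<longrightarrow> (a div a2')^2*b \<le> (a div a2)^2*b"
    and "(a div a2)^2*b > a2^2"
  shows "\<exists>k::int. f = (a2^2, 2*a2*k, k^2 + (a div a2)^2*b) \<and> -a2 \<le> 2*k \<and> 2*k \<le> a2"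
proof -
  define m B where "m = a div a2" and "B = m^2*b"
  have a_eq: "a = a2*m" and m_pos: "0 < m"
    using assms(1,9,10) unfolding m_def by (auto simp: zero_less_mult_iff)
  have "derived_from f (1, 0, B) a2" using assms(11) unfolding m_def B_def .
  then obtain p q r where r: "0 < r" "p*r = a2" and fr: "equiv_bqf (subst (1, 0, B) p q 0 r) f"
    by (rule derived_from_triangular) (use assms(9) in simp)
  have p: "0 < p" "p dvd a" "(a div p)^2*b = r^2*B"
    using r assms(9) a_eq by (auto simp: zero_less_mult_iff B_def power_mult_distrib)
  then have "r^2*B \<le> B"
    using assms(12) derived_from_principal_upper[OF fr] unfolding m_def B_def by metis
  then have "r = 1" using eq_1_if_square_mult_le r(1) m_pos assms(2) unfolding B_def by simp
  then have fq: "equiv_bqf (subst (1, 0, B) a2 q 0 1) f" using r fr by simp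
  obtain k t where k: "q = k + a2*t" "-a2 < 2*k" "2*k \<le> a2"
    using centered_residue assms(9) by blast
  have "equiv_bqf (subst (1, 0, B) a2 k 0 1) f"
    using equiv_bqf_trans[OF equiv_principal_upper_shift[of B a2 k t]] fq k(1) by simp
  moreover have "reduced (subst (1, 0, B) a2 k 0 1)"
    using reduced_principal_upper assms(9,13) k unfolding m_def[symmetric] B_def[symmetric] by blast
  moreover obtain f1 f2 f3 where "f = (f1, f2, f3)" "0 < f1"
    using assms(5) by (cases f) (auto simp: pos_def_def)
  ultimately have "f = (a2^2, 2*a2*k, k^2 + B)"
    using reduced_equiv_eq[of f1 f2 f3] assms(3) equiv_bqf_sym
    unfolding subst_principal_upper by force
  then show ?thesis using k unfolding B_def m_def by auto
qed

end
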